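(* Let $G$ be a weighted graph. Let $F$ be a bipartite graph and let $\mathcal{H}$ be the class of all graphs that are weighted cross-bipartite swapping in $G$. Then every $\mathcal{H}$-blow-up $H$ of $F$ is bipartite swapping in $G$, i.e. $\hom(H,G)^2\le\hom(H\times K_2,G)$.
   Context: A weighted graph $G$ is a symmetric function $G:V(G)\times V(G)\to\mathbb{R}_{\ge0}$ on a finite set (loops allowed). For a graph $H$, $\hom(H,G)=\sum_{\phi:V(H)\to V(G)}\prod_{uv\in E(H)}G(\phi(u),\phi(v))$. The tensor product $H\times K_2$ has vertex set $V(H)\times\{1,2\}$ with $(u,i)\sim(v,j)$ iff $uv\in E(H)$ and $i\ne j$. A graph $H$ is weighted cross-bipartite swapping in $G$ if for all $\mathbf{a},\mathbf{b}:V(G)\to\mathbb{R}_{\ge0}$, \[\Big(\sum_{\phi:V(H)\to V(G)}\prod_{uv\in E(H)}G(\phi(u),\phi(v))\prod_{u}a_{\phi(u)}\Big)\Big(\sum_{\phi:V(H)\to V(G)}\prod_{uv\in E(H)}G(\phi(u),\phi(v))\prod_{u}b_{\phi(u)}\Big)\le \sum_{\psi:V(H)\times\{1,2\}\to V(G)}\prod_{xy\in E(H\times K_2)}G(\psi(x),\psi(y))\prod_{u\in V(H)}a_{\psi(u,1)}b_{\psi(u,2)}.\] For a class $\mathcal{H}$ and a graph $F$ on vertices $v_1,\dots,v_k$, an $\mathcal{H}$-blow-up of $F$ is obtained by choosing $H_1,\dots,H_k\in\mathcal{H}$, taking their disjoint union, and adding all edges between $V(H_i)$ and $V(H_j)$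 whenever $v_iv_j\in E(F)$. *)

theory Defs
  imports Complex_Main "HOL-Library.FuncSet"
begin

definition graph :: "'v set \<Rightarrow> 'v set set \<Rightarrow> bool" where
  "graph V E \<longleftrightarrow> finite V \<and> (\<forall>e\<in>E. e \<subseteq> V \<and> card e = 2)"

definition weighted_graph :: "('g::finite \<Rightarrow> 'g \<Rightarrow> real) \<Rightarrow> bool" where
  "weighted_graph G \<longleftrightarrow> (\<forall>x y. G x y = G y x) \<and> (\<forall>x y. 0 \<le> G x y)"

definition edge_val :: "('g \<Rightarrow> 'g \<Rightarrow> real) \<Rightarrow> ('v \<Rightarrow> 'g) \<Rightarrow> 'v set \<Rightarrow> real" where
  "edge_val G \<phi> e = (THE w. \<exists>u v. u \<noteq> v \<and> e = {u, v} \<and> w = G (\<phi> u) (\<phi> v))"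

definition hom_w :: "'v set \<Rightarrow> 'v set set \<Rightarrow> ('g::finite \<Rightarrow> 'g \<Rightarrow> real) \<Rightarrow> ('g \<Rightarrow> real) \<Rightarrow> real" where
  "hom_w V E G a = (\<Sum>\<phi> \<in> V \<rightarrow>\<^sub>E (UNIV::'g set). (\<Prod>e\<in>E. edge_val G \<phi> e) * (\<Prod>u\<in>V. a (\<phi> u)))"

definition hom :: "'v set \<Rightarrow> 'v set set \<Rightarrow> ('g::finite \<Rightarrow> 'g \<Rightarrow> real) \<Rightarrow> real" where
  "hom V E G = (\<Sum>\<phi> \<in> V \<rightarrow>\<^sub>E (UNIV::'g set). (\<Prod>e\<in>E. edge_val G \<phi> e))"

text \<open>Tensor product H x K2, with V(K2) = bool (True = 1, False = 2).\<close>
definition tensorK2_V :: "'v set \<Rightarrow> ('v \<times> bool) set" where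
  "tensorK2_V V = V \<times> (UNIV::bool set)"

definition tensorK2_E :: "'v set set \<Rightarrow> ('v \<times> bool) set set" where
  "tensorK2_E E = {{(u, i), (v, j)} | u v i j. {u, v} \<in> E \<and> i \<noteq> j}"

definition hom_cross :: "'v set \<Rightarrow> 'v set set \<Rightarrow> ('g::finite \<Rightarrow> 'g \<Rightarrow> real) \<Rightarrow> ('g \<Rightarrow> real) \<Rightarrow> ('g \<Rightarrow> real) \<Rightarrow> real" where
  "hom_cross V E G a b = (\<Sum>\<psi> \<in> tensorK2_V V \<rightarrow>\<^sub>E (UNIV::'g set).
      (\<Prod>e\<in>tensorK2_E E. edge_val G \<psi> e) * (\<Prod>u\<in>V. a (\<psi> (u, True)) * b (\<psi> (u, False))))"

definition wcb_swapping :: "'v set \<Rightarrow> 'v set set \<Rightarrow> ('g::finite \<Rightarrow> 'g \<Rightarrow> real) \<Rightarrow> bool" where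
  "wcb_swapping V E G \<longleftrightarrow> (\<forall>a b. (\<forall>x. 0 \<le> a x) \<longrightarrow> (\<forall>x. 0 \<le> b x) \<longrightarrow>
       hom_w V E G a * hom_w V E G b \<le> hom_cross V E G a b)"

definition bipartite_swapping :: "'v set \<Rightarrow> 'v set set \<Rightarrow> ('g::finite \<Rightarrow> 'g \<Rightarrow> real) \<Rightarrow> bool" where
  "bipartite_swapping V E G \<longleftrightarrow> (hom V E G)\<^sup>2 \<le> hom (tensorK2_V V) (tensorK2_E E) G"

definition bipartite :: "'v set \<Rightarrow> 'v set set \<Rightarrow> bool" where
  "bipartite V E \<longleftrightarrow> (\<exists>A \<subseteq> V. \<forall>e\<in>E. card (e \<inter> A) = 1)"

definition blowup_V :: "'f set \<Rightarrow> ('f \<Rightarrow> 'h set) \<Rightarrow> ('f \<times> 'h) set" where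
  "blowup_V VF HV = Sigma VF HV"

definition blowup_E :: "'f set \<Rightarrow> 'f set set \<Rightarrow> ('f \<Rightarrow> 'h set) \<Rightarrow> ('f \<Rightarrow> 'h set set) \<Rightarrow> ('f \<times> 'h) set set" where
  "blowup_E VF EF HV HE =
     {{(i, x), (i, y)} | i x y. i \<in> VF \<and> {x, y} \<in> HE i}
   \<union> {{(i, x), (j, y)} | i j x y. {i, j} \<in> EF \<and> x \<in> HV i \<and> y \<in> HV j}"

end

theory Submission
  imports Defs
begin

text \<open>
  Fix a bipartition A of F and orient every edge of F from A to its complement. Grouping a
  map of the blow-up H into G by its restrictions \<alpha>_i to the blocks V(H_i) writes hom(H, G)
  as a sum over \<alpha> of the product of the edge weights of the H_i under \<alpha>_i times a cross weight
  C(\<alpha>) collecting the edges between blocks. A map of H \<times> K2 into G is a map of H into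
  the tensor square of G, whose vertices are pairs, and because every arc leaves A its cross
  weight splits as C(\<alpha>) C(\<beta>), where \<alpha> reads the first coordinate on the blocks in A and the
  second one elsewhere, and \<beta> the other way round. With all blocks but H_i frozen, C depends
  on the i-th block only through a product of vertex weights, F having no loops, so the
  inequality for a single block is the weighted cross-bipartite swapping property of H_i.
  Summing out the blocks one at a time keeps these one-block inequalities for the remaining
  blocks and ends in hom(H, G)^2 \<le> hom(H \<times> K2, G).
\<close>

section \<open>Tensorising a one-coordinate swapping inequality\<close>

lemma sum_PiE_insert:
  assumes "k \<notin> I"
  shows "(\<Sum>\<alpha>\<in>PiE (insert k I) M. g \<alpha>) = (\<Sum>p\<in>M k. \<Sum>\<gamma>\<in>PiE I M. g (\<gamma>(k := p)))"
  unfolding PiE_insert_eq sum.reindex[OF inj_combinator[OF assms]] sum.cartesian_product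
  by (simp add: case_prod_beta)

lemma sum_PiE_insert_prod_weight:
  fixes w :: "'i \<Rightarrow> 'm \<Rightarrow> 'a::comm_semiring_1"
  assumes "k \<notin> I" "finite I"
  shows "(\<Sum>\<alpha>\<in>PiE (insert k I) M. (\<Prod>i\<in>insert k I. w i (\<alpha> i)) * g \<alpha>)
    = (\<Sum>\<gamma>\<in>PiE I M. (\<Prod>i\<in>I. w i (\<gamma> i)) * (\<Sum>p\<in>M k. w k p * g (\<gamma>(k := p))))"
proof -
  have "(\<Prod>i\<in>I. w i ((\<gamma>(k := p)) i)) = (\<Prod>i\<in>I. w i (\<gamma> i))" for \<gamma> p
    using assms(1) by (intro prod.cong) auto
  then have "(\<Sum>\<alpha>\<in>PiE (insert k I) M. (\<Prod>i\<in>insert k I. w i (\<alpha> i)) * g \<alpha>)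
      = (\<Sum>p\<in>M k. \<Sum>\<gamma>\<in>PiE I M. (\<Prod>i\<in>I. w i (\<gamma> i)) * (w k p * g (\<gamma>(k := p))))"
    unfolding sum_PiE_insert[OF assms(1)] using assms by (simp add: algebra_simps)
  also have "\<dots> = (\<Sum>\<gamma>\<in>PiE I M. \<Sum>p\<in>M k. (\<Prod>i\<in>I. w i (\<gamma> i)) * (w k p * g (\<gamma>(k := p))))"
    by (rule sum.swap)
  finally show ?thesis
    by (simp only: sum_distrib_left)
qed

definition marginal :: "('m \<Rightarrow> real) \<Rightarrow> 'm set \<Rightarrow> 'i \<Rightarrow> (('i \<Rightarrow> 'm) \<Rightarrow> real) \<Rightarrow> ('i \<Rightarrow> 'm) \<Rightarrow> real"
  where "marginal w P i C \<gamma> = (\<Sum>p\<in>P. w p * C (\<gamma>(i := p)))"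

definition coupling :: "('n \<Rightarrow> real) \<Rightarrow> 'n set \<Rightarrow> ('n \<Rightarrow> 'm) \<Rightarrow> ('n \<Rightarrow> 'm) \<Rightarrow> 'i
    \<Rightarrow> (('i \<Rightarrow> 'm) \<Rightarrow> real) \<Rightarrow> ('i \<Rightarrow> 'm) \<Rightarrow> ('i \<Rightarrow> 'm) \<Rightarrow> real"
  where "coupling X Q pl pr i C \<alpha> \<beta> = (\<Sum>q\<in>Q. X q * C (\<alpha>(i := pl q)) * C (\<beta>(i := pr q)))"

lemma marginal_commute:
  assumes "i \<noteq> k"
  shows "marginal w P i (marginal v Q k C) = marginal v Q k (marginal w P i C)"
proof
  fix \<gamma>
  have "marginal w P i (marginal v Q k C) \<gamma> = (\<Sum>p\<in>P. \<Sum>n\<in>Q. w p * v n * C (\<gamma>(i := p, k := n)))"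
    by (simp add: marginal_def sum_distrib_left mult.assoc)
  also have "\<dots> = (\<Sum>n\<in>Q. \<Sum>p\<in>P. w p * v n * C (\<gamma>(i := p, k := n)))"
    by (rule sum.swap)
  also have "\<dots> = marginal v Q k (marginal w P i C) \<gamma>"
    by (simp add: marginal_def sum_distrib_left fun_upd_twist[OF assms] algebra_simps)
  finally show "marginal w P i (marginal v Q k C) \<gamma> = marginal v Q k (marginal w P i C) \<gamma>" .
qed

lemma coupling_marginal:
  assumes "i \<noteq> k"
  shows "coupling X Q pl pr i (marginal w P k C) \<alpha> \<beta>
    = (\<Sum>s\<in>P. \<Sum>t\<in>P. w s * w t * coupling X Q pl pr i C (\<alpha>(k := s)) (\<beta>(k := t)))"
proof -
  have "coupling X Q pl pr i (marginal w P k C) \<alpha> \<beta>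
      = (\<Sum>q\<in>Q. \<Sum>s\<in>P. \<Sum>t\<in>P. w s * w t * (X q * C (\<alpha>(i := pl q, k := s)) * C (\<beta>(i := pr q, k := t))))"
    by (simp add: coupling_def marginal_def sum_distrib_left sum_distrib_right algebra_simps)
  also have "\<dots> = (\<Sum>s\<in>P. \<Sum>q\<in>Q. \<Sum>t\<in>P. w s * w t * (X q * C (\<alpha>(i := pl q, k := s)) * C (\<beta>(i := pr q, k := t))))"
    by (rule sum.swap)
  also have "\<dots> = (\<Sum>s\<in>P. \<Sum>t\<in>P. \<Sum>q\<in>Q. w s * w t * (X q * C (\<alpha>(i := pl q, k := s)) * C (\<beta>(i := pr q, k := t))))"
    by (intro sum.cong refl sum.swap)
  finally show ?thesis
    by (simp add: coupling_def sum_distrib_left fun_upd_twist[OF assms])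
qed

lemma swapping_marginal:
  assumes "i \<noteq> k" and "\<And>p. p \<in> P \<Longrightarrow> 0 \<le> w p"
    and "\<And>\<alpha> \<beta>. marginal u R i C \<alpha> * marginal u R i C \<beta> \<le> coupling X Q pl pr i C \<alpha> \<beta>"
  shows "marginal u R i (marginal w P k C) \<alpha> * marginal u R i (marginal w P k C) \<beta>
    \<le> coupling X Q pl pr i (marginal w P k C) \<alpha> \<beta>"
proof -
  have "marginal u R i (marginal w P k C) \<alpha> * marginal u R i (marginal w P k C) \<beta>
      = (\<Sum>s\<in>P. \<Sum>t\<in>P. w s * w t * (marginal u R i C (\<alpha>(k := s)) * marginal u R i C (\<beta>(k := t))))"
    unfolding marginal_commute[OF assms(1)]
    by (simp add: marginal_def[of w] sum_product algebra_simps)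
  also have "\<dots> \<le> (\<Sum>s\<in>P. \<Sum>t\<in>P. w s * w t * coupling X Q pl pr i C (\<alpha>(k := s)) (\<beta>(k := t)))"
    using assms(2,3) by (intro sum_mono mult_left_mono) auto
  finally show ?thesis
    unfolding coupling_marginal[OF assms(1)] .
qed

lemma restrict_insert_fun_upd:
  assumes "k \<notin> I"
  shows "(\<lambda>i\<in>insert k I. p i ((\<gamma>(k := r)) i)) = (\<lambda>i\<in>I. p i (\<gamma> i))(k := p k r)"
  using assms by (auto simp: fun_eq_iff)

lemma square_sum_PiE_le_coupling:
  fixes f :: "'i \<Rightarrow> 'm \<Rightarrow> real" and X :: "'i \<Rightarrow> 'n \<Rightarrow> real"
  assumes "finite I"
    and "\<And>i p. i \<in> I \<Longrightarrow> p \<in> M i \<Longrightarrow> 0 \<le> f i p"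
    and "\<And>i q. i \<in> I \<Longrightarrow> q \<in> N i \<Longrightarrow> 0 \<le> X i q"
    and "\<And>i \<alpha> \<beta>. i \<in> I \<Longrightarrow> marginal (f i) (M i) i C \<alpha> * marginal (f i) (M i) i C \<beta>
           \<le> coupling (X i) (N i) (pl i) (pr i) i C \<alpha> \<beta>"
  shows "(\<Sum>\<alpha>\<in>PiE I M. (\<Prod>i\<in>I. f i (\<alpha> i)) * C \<alpha>)\<^sup>2
    \<le> (\<Sum>\<psi>\<in>PiE I N. (\<Prod>i\<in>I. X i (\<psi> i)) * C (\<lambda>i\<in>I. pl i (\<psi> i)) * C (\<lambda>i\<in>I. pr i (\<psi> i)))"
  using assms
proof (induction I arbitrary: C rule: finite_induct)
  case empty
  then show ?case
    by (simp add: power2_eq_square)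
next
  case (insert k I)
  define C' where "C' = marginal (f k) (M k) k C"
  have "(\<Sum>\<alpha>\<in>PiE (insert k I) M. (\<Prod>i\<in>insert k I. f i (\<alpha> i)) * C \<alpha>)\<^sup>2
      = (\<Sum>\<gamma>\<in>PiE I M. (\<Prod>i\<in>I. f i (\<gamma> i)) * C' \<gamma>)\<^sup>2"
    unfolding sum_PiE_insert_prod_weight[OF insert(2,1)] C'_def marginal_def ..
  also have "\<dots> \<le> (\<Sum>\<psi>\<in>PiE I N. (\<Prod>i\<in>I. X i (\<psi> i)) * C' (\<lambda>i\<in>I. pl i (\<psi> i)) * C' (\<lambda>i\<in>I. pr i (\<psi> i)))"
  proof (rule insert.IH)
    fix i \<alpha> \<beta> assume "i \<in> I"
    with insert show "marginal (f i) (M i) i C' \<alpha> * marginal (f i) (M i) i C' \<beta>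
        \<le> coupling (X i) (N i) (pl i) (pr i) i C' \<alpha> \<beta>"
      unfolding C'_def by (intro swapping_marginal) auto
  qed (use insert in auto)
  also have "\<dots> \<le> (\<Sum>\<psi>\<in>PiE I N. (\<Prod>i\<in>I. X i (\<psi> i))
      * coupling (X k) (N k) (pl k) (pr k) k C (\<lambda>i\<in>I. pl i (\<psi> i)) (\<lambda>i\<in>I. pr i (\<psi> i)))"
    unfolding mult.assoc C'_def
    using insert by (intro sum_mono mult_left_mono prod_nonneg) (auto simp: PiE_iff)
  also have "\<dots> = (\<Sum>\<psi>\<in>PiE (insert k I) N. (\<Prod>i\<in>insert k I. X i (\<psi> i))
      * C (\<lambda>i\<in>insert k I. pl i (\<psi> i)) * C (\<lambda>i\<in>insert k I. pr i (\<psi> i)))"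
    unfolding mult.assoc coupling_def
    by (subst sum_PiE_insert_prod_weight[OF insert(2,1)])
      (simp only: restrict_insert_fun_upd[OF insert(2)])
  finally show ?case .
qed

section \<open>Edge weights and the tensor square\<close>

lemma edge_val_doubleton:
  assumes sym: "\<And>x y. G x y = G y x" and "u \<noteq> v"
  shows "edge_val G \<phi> {u, v} = G (\<phi> u) (\<phi> v)"
  unfolding edge_val_def
proof (rule the_equality)
  show "\<exists>u' v'. u' \<noteq> v' \<and> {u, v} = {u', v'} \<and> G (\<phi> u) (\<phi> v) = G (\<phi> u') (\<phi> v')"
    using assms(2) by blast
next
  fix w assume "\<exists>u' v'. u' \<noteq> v' \<and> {u, v} = {u', v'} \<and> w = G (\<phi> u') (\<phi> v')"
  then show "w = G (\<phi> u) (\<phi> v)"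
    using sym by (auto simp: doubleton_eq_iff)
qed

lemma edge_val_nonneg:
  assumes "\<And>x y. G x y = G y x" and "\<And>x y. 0 \<le> G x y" and "card e = 2"
  shows "0 \<le> edge_val G \<phi> e"
  using assms by (auto simp: card_2_iff edge_val_doubleton)

lemma graph_edges: "graph V E \<Longrightarrow> e \<in> E \<Longrightarrow> card e = 2 \<and> e \<subseteq> V"
  unfolding graph_def by blast

lemma graph_finite_edges: "graph V E \<Longrightarrow> finite E"
  unfolding graph_def by (meson Pow_iff finite_Pow_iff finite_subset subsetI)

lemma prod_edge_val_nonneg:
  assumes "graph V E" and "\<And>x y. G x y = G y x" and "\<And>x y. 0 \<le> G x y"
  shows "0 \<le> (\<Prod>e\<in>E. edge_val G \<phi> e)"
  using graph_edges[OF assms(1)] by (intro prod_nonneg edge_val_nonneg assms(2,3)) auto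

definition tensor_square :: "('g \<Rightarrow> 'g \<Rightarrow> real) \<Rightarrow> 'g \<times> 'g \<Rightarrow> 'g \<times> 'g \<Rightarrow> real"
  where "tensor_square G p q = G (fst p) (snd q) * G (snd p) (fst q)"

lemma tensor_square_sym: "(\<And>x y. G x y = G y x) \<Longrightarrow> tensor_square G p q = tensor_square G q p"
  unfolding tensor_square_def by (simp add: mult.commute)

lemma tensor_square_nonneg: "(\<And>x y. 0 \<le> G x y) \<Longrightarrow> 0 \<le> tensor_square G p q"
  unfolding tensor_square_def by simp

definition pair_copies :: "'v set \<Rightarrow> ('v \<times> bool \<Rightarrow> 'g) \<Rightarrow> 'v \<Rightarrow> 'g \<times> 'g"
  where "pair_copies V \<psi> = (\<lambda>u\<in>V. (\<psi> (u, True), \<psi> (u, False)))"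

lemma bij_betw_pair_copies:
  "bij_betw (pair_copies V) (V \<times> UNIV \<rightarrow>\<^sub>E (UNIV :: 'g set)) (V \<rightarrow>\<^sub>E UNIV)"
proof (rule bij_betw_byWitness[where f' = "\<lambda>q. \<lambda>(u, c)\<in>V \<times> UNIV. if c then fst (q u) else snd (q u)"])
  show "\<forall>\<psi>\<in>V \<times> UNIV \<rightarrow>\<^sub>E (UNIV :: 'g set).
      (\<lambda>(u, c)\<in>V \<times> UNIV. if c then fst (pair_copies V \<psi> u) else snd (pair_copies V \<psi> u)) = \<psi>"
    by (auto simp: pair_copies_def fun_eq_iff PiE_def extensional_def)
  show "\<forall>q\<in>V \<rightarrow>\<^sub>E (UNIV :: ('g \<times> 'g) set).
      pair_copies V (\<lambda>(u, c)\<in>V \<times> UNIV. if c then fst (q u) else snd (q u)) = q"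
    by (auto simp: pair_copies_def fun_eq_iff PiE_def extensional_def)
qed (auto simp: pair_copies_def)

lemma tensorK2_E_singleton:
  "u \<noteq> v \<Longrightarrow> tensorK2_E {{u, v}} = {{(u, True), (v, False)}, {(u, False), (v, True)}}"
  unfolding tensorK2_E_def by (auto simp: doubleton_eq_iff)

lemma prod_tensorK2_E:
  assumes sym: "\<And>x y. G x y = G y x" and "graph V E"
  shows "(\<Prod>t\<in>tensorK2_E E. edge_val G \<psi> t) = (\<Prod>e\<in>E. edge_val (tensor_square G) (pair_copies V \<psi>) e)"
proof -
  have "tensorK2_E E = (\<Union>e\<in>E. tensorK2_E {e})"
    unfolding tensorK2_E_def by blast
  moreover have "(\<Prod>t\<in>(\<Union>e\<in>E. tensorK2_E {e}). edge_val G \<psi> t) = (\<Prod>e\<in>E. \<Prod>t\<in>tensorK2_E {e}. edge_val G \<psi> t)"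
  proof (rule prod.UNION_disjoint[OF graph_finite_edges[OF assms(2)]])
    show "\<forall>e\<in>E. finite (tensorK2_E {e})"
    proof
      fix e assume "e \<in> E"
      then obtain u v where "e = {u, v}" "u \<noteq> v"
        using graph_edges[OF assms(2)] by (meson card_2_iff)
      then show "finite (tensorK2_E {e})"
        by (simp add: tensorK2_E_singleton)
    qed
    have "t \<in> tensorK2_E {e} \<Longrightarrow> fst ` t = e" for t e
      unfolding tensorK2_E_def by auto
    then show "\<forall>e\<in>E. \<forall>e'\<in>E. e \<noteq> e' \<longrightarrow> tensorK2_E {e} \<inter> tensorK2_E {e'} = {}"
      by blast
  qed
  moreover have "(\<Prod>t\<in>tensorK2_E {e}. edge_val G \<psi> t) = edge_val (tensor_square G) (pair_copies V \<psi>) e"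
    if "e \<in> E" for e
  proof -
    obtain u v where e: "e = {u, v}" "u \<noteq> v" "u \<in> V" "v \<in> V"
      using graph_edges[OF assms(2) \<open>e \<in> E\<close>] by (auto simp: card_2_iff)
    then have "{(u, True), (v, False)} \<noteq> {(u, False), (v, True)}"
      by (auto simp: doubleton_eq_iff)
    with e show ?thesis
      by (simp add: tensorK2_E_singleton edge_val_doubleton sym tensor_square_sym
          tensor_square_def pair_copies_def)
  qed
  ultimately show ?thesis
    by simp
qed

lemma hom_tensorK2:
  assumes "\<And>x y. G x y = G y x" and "graph V E"
  shows "hom (tensorK2_V V) (tensorK2_E E) G = hom V E (tensor_square G)"
proof -
  have "hom (tensorK2_V V) (tensorK2_E E) G
      = (\<Sum>\<psi>\<in>V \<times> UNIV \<rightarrow>\<^sub>E UNIV. \<Prod>e\<in>E. edge_val (tensor_square G) (pair_copies V \<psi>) e)"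
    unfolding hom_def tensorK2_V_def
    using prod_tensorK2_E[where G = G, OF assms] by simp
  also have "\<dots> = hom V E (tensor_square G)"
    unfolding hom_def by (rule sum.reindex_bij_betw[OF bij_betw_pair_copies])
  finally show ?thesis .
qed

lemma hom_cross_eq:
  assumes "\<And>x y. G x y = G y x" and "graph V E"
  shows "hom_cross V E G a b = (\<Sum>q\<in>V \<rightarrow>\<^sub>E UNIV.
    (\<Prod>e\<in>E. edge_val (tensor_square G) q e) * (\<Prod>u\<in>V. a (fst (q u)) * b (snd (q u))))"
proof -
  have "hom_cross V E G a b = (\<Sum>\<psi>\<in>V \<times> UNIV \<rightarrow>\<^sub>E UNIV.
      (\<Prod>e\<in>E. edge_val (tensor_square G) (pair_copies V \<psi>) e)
      * (\<Prod>u\<in>V. a (fst (pair_copies V \<psi> u)) * b (snd (pair_copies V \<psi> u))))"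
    unfolding hom_cross_def tensorK2_V_def
    using prod_tensorK2_E[where G = G, OF assms] by (simp add: pair_copies_def)
  also have "\<dots> = (\<Sum>q\<in>V \<rightarrow>\<^sub>E UNIV.
      (\<Prod>e\<in>E. edge_val (tensor_square G) q e) * (\<Prod>u\<in>V. a (fst (q u)) * b (snd (q u))))"
    by (rule sum.reindex_bij_betw[OF bij_betw_pair_copies])
  finally show ?thesis .
qed

lemma wcb_swappingD:
  assumes "wcb_swapping V E G" and "\<And>x. 0 \<le> a x" and "\<And>x. 0 \<le> b x"
  shows "hom_w V E G a * hom_w V E G b \<le> (if s then hom_cross V E G a b else hom_cross V E G b a)"
proof -
  have "hom_w V E G a * hom_w V E G b \<le> hom_cross V E G a b"
    and "hom_w V E G b * hom_w V E G a \<le> hom_cross V E G b a"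
    using assms unfolding wcb_swapping_def by blast+
  then show ?thesis
    by (simp add: mult.commute)
qed

definition side_proj :: "bool \<Rightarrow> ('h \<Rightarrow> 'g \<times> 'g) \<Rightarrow> 'h \<Rightarrow> 'g"
  where "side_proj s q = (\<lambda>z. if s then fst (q z) else snd (q z))"

lemma marginal_eq_hom_w:
  assumes "\<And>p. C (\<alpha>(i := p)) = K * (\<Prod>z\<in>V. a (p z))"
  shows "marginal (\<lambda>p. \<Prod>e\<in>E. edge_val G p e) (V \<rightarrow>\<^sub>E UNIV) i C \<alpha> = K * hom_w V E G a"
  using assms by (simp add: marginal_def hom_w_def sum_distrib_left algebra_simps)

lemma coupling_eq_hom_cross:
  fixes G :: "'g::finite \<Rightarrow> 'g \<Rightarrow> real"
  assumes "\<And>x y. G x y = G y x" and "graph V E"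
    and "\<And>p. C (\<alpha>(i := p)) = Ka * (\<Prod>z\<in>V. a (p z))"
    and "\<And>p. C (\<beta>(i := p)) = Kb * (\<Prod>z\<in>V. b (p z))"
  shows "coupling (\<lambda>q. \<Prod>e\<in>E. edge_val (tensor_square G) q e) (V \<rightarrow>\<^sub>E UNIV) (side_proj s) (side_proj (\<not> s)) i C \<alpha> \<beta>
    = Ka * Kb * (if s then hom_cross V E G a b else hom_cross V E G b a)"
  using assms(3,4)
  by (cases s) (simp_all add: coupling_def hom_cross_eq[OF assms(1,2)] side_proj_def
      sum_distrib_left prod.distrib algebra_simps)

section \<open>Blow-ups of a bipartite graph\<close>

definition curry_Sigma :: "'i set \<Rightarrow> ('i \<Rightarrow> 'x set) \<Rightarrow> ('i \<times> 'x \<Rightarrow> 'a) \<Rightarrow> 'i \<Rightarrow> 'x \<Rightarrow> 'a"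
  where "curry_Sigma I Z \<Phi> = (\<lambda>i\<in>I. \<lambda>x\<in>Z i. \<Phi> (i, x))"

lemma bij_betw_curry_Sigma:
  "bij_betw (curry_Sigma I Z) (Sigma I Z \<rightarrow>\<^sub>E (UNIV :: 'a set)) (\<Pi>\<^sub>E i\<in>I. Z i \<rightarrow>\<^sub>E UNIV)"
proof (rule bij_betw_byWitness[where f' = "\<lambda>\<alpha>. \<lambda>(i, x)\<in>Sigma I Z. \<alpha> i x"])
  show "\<forall>\<Phi>\<in>Sigma I Z \<rightarrow>\<^sub>E (UNIV :: 'a set). (\<lambda>(i, x)\<in>Sigma I Z. curry_Sigma I Z \<Phi> i x) = \<Phi>"
    by (auto simp: curry_Sigma_def fun_eq_iff PiE_def extensional_def)
  show "\<forall>\<alpha>\<in>\<Pi>\<^sub>E i\<in>I. Z i \<rightarrow>\<^sub>E (UNIV :: 'a set). curry_Sigma I Z (\<lambda>(i, x)\<in>Sigma I Z. \<alpha> i x) = \<alpha>"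
    by (auto simp: curry_Sigma_def fun_eq_iff PiE_def extensional_def Pi_iff)
qed (simp_all add: curry_Sigma_def image_subset_iff)

lemma graph_blowup:
  assumes "graph VF EF" and "\<And>i. i \<in> VF \<Longrightarrow> graph (HV i) (HE i)"
  shows "graph (blowup_V VF HV) (blowup_E VF EF HV HE)"
  unfolding graph_def
proof
  show "finite (blowup_V VF HV)"
    using assms unfolding blowup_V_def graph_def by auto
  show "\<forall>t\<in>blowup_E VF EF HV HE. t \<subseteq> blowup_V VF HV \<and> card t = 2"
  proof
    fix t assume "t \<in> blowup_E VF EF HV HE"
    then consider (internal) i x y where "t = {(i, x), (i, y)}" "i \<in> VF" "{x, y} \<in> HE i"
      | (cross) i j x y where "t = {(i, x), (j, y)}" "{i, j} \<in> EF" "x \<in> HV i" "y \<in> HV j"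
      unfolding blowup_E_def by blast
    then show "t \<subseteq> blowup_V VF HV \<and> card t = 2"
    proof cases
      case internal
      then have "{x, y} \<subseteq> HV i" "card {x, y} = 2"
        using graph_edges assms(2) by blast+
      with internal show ?thesis
        unfolding blowup_V_def by (cases "x = y") auto
    next
      case cross
      then have "{i, j} \<subseteq> VF" "card {i, j} = 2"
        using graph_edges assms(1) by blast+
      with cross show ?thesis
        unfolding blowup_V_def by (cases "i = j") auto
    qed
  qed
qed

definition cross_weight :: "('c \<Rightarrow> 'c \<Rightarrow> real) \<Rightarrow> ('f \<times> 'f) set \<Rightarrow> ('f \<Rightarrow> 'h set) \<Rightarrow> ('f \<Rightarrow> 'h \<Rightarrow> 'c) \<Rightarrow> real"
  where "cross_weight G D HV \<alpha> = (\<Prod>(j, k)\<in>D. \<Prod>x\<in>HV j. \<Prod>y\<in>HV k. G (\<alpha> j x) (\<alpha> k y))"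

lemma cross_weight_fun_upd_factor:
  assumes nonneg: "\<And>x y. 0 \<le> G x y" and loopless: "\<And>j k. (j, k) \<in> D \<Longrightarrow> j \<noteq> k"
  obtains K a where "0 \<le> K" "\<And>g. 0 \<le> a g"
    "\<And>p. cross_weight G D HV (\<alpha>(i := p)) = K * (\<Prod>z\<in>HV i. a (p z))"
proof -
  \<comment> \<open>D has no loops, so every factor of the cross weight contains p on at most one side.\<close>
  define K_at where "K_at = (\<lambda>(j, k). if j \<noteq> i \<and> k \<noteq> i then (\<Prod>x\<in>HV j. \<Prod>y\<in>HV k. G (\<alpha> j x) (\<alpha> k y)) else 1)"
  define out_at where "out_at = (\<lambda>g (j, k). if j = i then (\<Prod>y\<in>HV k. G g (\<alpha> k y)) else 1)"
  define in_at where "in_at = (\<lambda>g (j, k). if k = i then (\<Prod>x\<in>HV j. G (\<alpha> j x) g) else 1)"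
  define K where "K = (\<Prod>jk\<in>D. K_at jk)"
  define a where "a = (\<lambda>g. \<Prod>jk\<in>D. out_at g jk * in_at g jk)"
  show thesis
  proof (rule that)
    show "0 \<le> K"
      unfolding K_def K_at_def using nonneg by (auto intro!: prod_nonneg)
    show "0 \<le> a g" for g
      unfolding a_def out_at_def in_at_def using nonneg by (auto intro!: prod_nonneg mult_nonneg_nonneg)
    fix p
    have "K * (\<Prod>z\<in>HV i. a (p z))
        = (\<Prod>jk\<in>D. K_at jk * ((\<Prod>z\<in>HV i. out_at (p z) jk) * (\<Prod>z\<in>HV i. in_at (p z) jk)))"
      unfolding K_def a_def by (subst prod.swap) (simp add: prod.distrib)
    also have "\<dots> = cross_weight G D HV (\<alpha>(i := p))"
      unfolding cross_weight_def
    proof (rule prod.cong[OF refl], clarify)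
      fix j k assume "(j, k) \<in> D"
      then have "j \<noteq> k"
        by (rule loopless)
      then show "K_at (j, k) * ((\<Prod>z\<in>HV i. out_at (p z) (j, k)) * (\<Prod>z\<in>HV i. in_at (p z) (j, k)))
          = (\<Prod>x\<in>HV j. \<Prod>y\<in>HV k. G ((\<alpha>(i := p)) j x) ((\<alpha>(i := p)) k y))"
      proof (cases "k = i")
        case True
        with \<open>j \<noteq> k\<close> show ?thesis
          by (simp add: K_at_def out_at_def in_at_def prod.swap[of _ "HV i"])
      next
        case False
        then show ?thesis
          by (cases "j = i") (simp_all add: K_at_def out_at_def in_at_def)
      qed
    qed
    finally show "cross_weight G D HV (\<alpha>(i := p)) = K * (\<Prod>z\<in>HV i. a (p z))" ..
  qed
qed

locale bipartite_blowup =
  fixes VF :: "'f set" and EF :: "'f set set" and HV :: "'f \<Rightarrow> 'h set" and HE :: "'f \<Rightarrow> 'h set set"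
    and A :: "'f set"
  assumes graph_F: "graph VF EF"
    and graph_H: "\<And>i. i \<in> VF \<Longrightarrow> graph (HV i) (HE i)"
    and bipartition: "\<And>e. e \<in> EF \<Longrightarrow> card (e \<inter> A) = 1"
begin

definition arcs :: "('f \<times> 'f) set"
  where "arcs = {(j, k). {j, k} \<in> EF \<and> j \<in> A}"

definition internal_edges :: "('f \<times> 'h) set set"
  where "internal_edges = (\<Union>i\<in>VF. image (Pair i) ` HE i)"

definition cross_edges :: "('f \<times> 'h) set set"
  where "cross_edges = (\<lambda>((j, k), x, y). {(j, x), (k, y)}) ` Sigma arcs (\<lambda>(j, k). HV j \<times> HV k)"

lemma arcsD:
  assumes "(j, k) \<in> arcs"
  shows "j \<in> VF" "k \<in> VF" "j \<in> A" "k \<notin> A"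
proof -
  have e: "{j, k} \<in> EF" "j \<in> A"
    using assms by (auto simp: arcs_def)
  then have "{j, k} \<subseteq> VF" "card {j, k} = 2"
    using graph_edges[OF graph_F] by blast+
  have "k \<notin> A"
  proof
    assume "k \<in> A"
    then have "{j, k} \<inter> A = {j, k}"
      using e by auto
    then show False
      using bipartition[OF e(1)] \<open>card {j, k} = 2\<close> by simp
  qed
  with e \<open>{j, k} \<subseteq> VF\<close> show "j \<in> VF" "k \<in> VF" "j \<in> A" "k \<notin> A"
    by auto
qed

lemma finite_arcs: "finite arcs"
proof (rule finite_subset)
  show "arcs \<subseteq> VF \<times> VF"
    using arcsD by auto
  show "finite (VF \<times> VF)"
    using graph_F by (simp add: graph_def)
qed

lemma finite_HV: "i \<in> VF \<Longrightarrow> finite (HV i)"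
  using graph_H by (simp add: graph_def)

lemma finite_HE: "i \<in> VF \<Longrightarrow> finite (HE i)"
  using graph_H graph_finite_edges by blast

lemma finite_arc_blocks: "(j, k) \<in> arcs \<Longrightarrow> finite (HV j \<times> HV k)"
  using arcsD(1,2) finite_HV by blast

lemma H_edgeE:
  assumes "i \<in> VF" "e \<in> HE i"
  obtains x y where "e = {x, y}" "x \<noteq> y" "x \<in> HV i" "y \<in> HV i"
  using graph_edges[OF graph_H[OF assms(1)] assms(2)] by (auto simp: card_2_iff)

lemma doubleton_in_cross_edges:
  assumes "{i, j} \<in> EF" "x \<in> HV i" "y \<in> HV j"
  shows "{(i, x), (j, y)} \<in> cross_edges"
proof -
  have "i \<in> A \<or> j \<in> A"
    using bipartition[OF assms(1)] by (cases "i \<in> A"; cases "j \<in> A") auto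
  then consider "(i, j) \<in> arcs" | "(j, i) \<in> arcs"
    using assms(1) by (auto simp: arcs_def insert_commute)
  then show ?thesis
  proof cases
    case 1
    with assms(2,3) have "((i, j), x, y) \<in> Sigma arcs (\<lambda>(j, k). HV j \<times> HV k)"
      by simp
    then show ?thesis
      unfolding cross_edges_def by (rule rev_image_eqI) simp
  next
    case 2
    with assms(2,3) have "((j, i), y, x) \<in> Sigma arcs (\<lambda>(j, k). HV j \<times> HV k)"
      by simp
    then show ?thesis
      unfolding cross_edges_def by (rule rev_image_eqI) (simp add: insert_commute)
  qed
qed

lemma blowup_E_eq: "blowup_E VF EF HV HE = internal_edges \<union> cross_edges"
proof (intro equalityI subsetI)
  fix t assume "t \<in> blowup_E VF EF HV HE"
  then consider (internal) i x y where "t = {(i, x), (i, y)}" "i \<in> VF" "{x, y} \<in> HE i"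
    | (cross) i j x y where "t = {(i, x), (j, y)}" "{i, j} \<in> EF" "x \<in> HV i" "y \<in> HV j"
    unfolding blowup_E_def by blast
  then show "t \<in> internal_edges \<union> cross_edges"
  proof cases
    case internal
    then have "t = Pair i ` {x, y}"
      by auto
    with internal show ?thesis
      unfolding internal_edges_def by blast
  next
    case cross
    then show ?thesis
      using doubleton_in_cross_edges by blast
  qed
next
  fix t assume "t \<in> internal_edges \<union> cross_edges"
  then show "t \<in> blowup_E VF EF HV HE"
  proof
    assume "t \<in> internal_edges"
    then obtain i e where "i \<in> VF" "e \<in> HE i" "t = Pair i ` e"
      unfolding internal_edges_def by auto
    moreover obtain x y where "e = {x, y}"
      using H_edgeE calculation by metis
    ultimately show ?thesis
      unfolding blowup_E_def by auto
  next
    assume "t \<in> cross_edges"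
    then obtain j k x y where "(j, k) \<in> arcs" "x \<in> HV j" "y \<in> HV k" "t = {(j, x), (k, y)}"
      unfolding cross_edges_def by auto
    then show ?thesis
      unfolding blowup_E_def arcs_def by blast
  qed
qed

lemma fst_internal_edge:
  assumes "i \<in> VF" and "t \<in> image (Pair i) ` HE i"
  shows "fst ` t = {i}"
proof -
  obtain e where "e \<in> HE i" "t = Pair i ` e"
    using assms(2) by blast
  moreover obtain x y where "e = {x, y}"
    using H_edgeE[OF assms(1) \<open>e \<in> HE i\<close>] by metis
  ultimately show ?thesis
    by auto
qed

lemma internal_edges_disjoint_cross_edges: "internal_edges \<inter> cross_edges = {}"
proof (intro disjoint_iff[THEN iffD2] allI impI notI)
  fix t assume "t \<in> internal_edges" and "t \<in> cross_edges"
  obtain i where "i \<in> VF" "t \<in> image (Pair i) ` HE i"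
    using \<open>t \<in> internal_edges\<close> unfolding internal_edges_def by blast
  then have "fst ` t = {i}"
    by (rule fst_internal_edge)
  obtain j k x y where "(j, k) \<in> arcs" "t = {(j, x), (k, y)}"
    using \<open>t \<in> cross_edges\<close> unfolding cross_edges_def by auto
  with \<open>fst ` t = {i}\<close> have "{j, k} = {i}"
    by simp
  moreover have "j \<noteq> k"
    using arcsD(3,4)[OF \<open>(j, k) \<in> arcs\<close>] by blast
  ultimately show False
    by (simp add: doubleton_eq_iff)
qed

lemma prod_internal_edges:
  assumes sym: "\<And>x y. G x y = G y x"
  shows "(\<Prod>t\<in>internal_edges. edge_val G \<Phi> t)
    = (\<Prod>i\<in>VF. \<Prod>e\<in>HE i. edge_val G (curry_Sigma VF HV \<Phi> i) e)"
proof -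
  have "(\<Prod>t\<in>internal_edges. edge_val G \<Phi> t) = (\<Prod>i\<in>VF. \<Prod>t\<in>image (Pair i) ` HE i. edge_val G \<Phi> t)"
    unfolding internal_edges_def
  proof (rule prod.UNION_disjoint)
    show "finite VF"
      using graph_F by (simp add: graph_def)
    show "\<forall>i\<in>VF. finite (image (Pair i) ` HE i)"
      using finite_HE by blast
    show "\<forall>i\<in>VF. \<forall>i'\<in>VF. i \<noteq> i' \<longrightarrow> image (Pair i) ` HE i \<inter> image (Pair i') ` HE i' = {}"
      using fst_internal_edge by (metis disjoint_iff singleton_inject)
  qed
  also have "\<dots> = (\<Prod>i\<in>VF. \<Prod>e\<in>HE i. edge_val G \<Phi> (Pair i ` e))"
  proof (intro prod.cong refl)
    fix i
    have "inj (Pair i :: 'h \<Rightarrow> 'f \<times> 'h)"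
      by (rule injI) simp
    then have "inj_on (image (Pair i)) (HE i)"
      by (simp add: inj_on_def inj_image_eq_iff)
    then show "(\<Prod>t\<in>image (Pair i) ` HE i. edge_val G \<Phi> t) = (\<Prod>e\<in>HE i. edge_val G \<Phi> (Pair i ` e))"
      by (simp add: prod.reindex)
  qed
  also have "\<dots> = (\<Prod>i\<in>VF. \<Prod>e\<in>HE i. edge_val G (curry_Sigma VF HV \<Phi> i) e)"
  proof (intro prod.cong refl)
    fix i e assume "i \<in> VF" "e \<in> HE i"
    then obtain x y where "e = {x, y}" "x \<noteq> y" "x \<in> HV i" "y \<in> HV i"
      by (rule H_edgeE)
    with \<open>i \<in> VF\<close> show "edge_val G \<Phi> (Pair i ` e) = edge_val G (curry_Sigma VF HV \<Phi> i) e"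
      by (simp add: edge_val_doubleton sym curry_Sigma_def)
  qed
  finally show ?thesis .
qed

lemma inj_on_cross_edge:
  "inj_on (\<lambda>((j, k), x, y). {(j, x), (k, y)}) (Sigma arcs (\<lambda>(j, k). HV j \<times> HV k))"
proof (rule inj_onI)
  fix a b
  assume "a \<in> Sigma arcs (\<lambda>(j, k). HV j \<times> HV k)" "b \<in> Sigma arcs (\<lambda>(j, k). HV j \<times> HV k)"
    and eq: "(\<lambda>((j, k), x, y). {(j, x), (k, y)}) a = (\<lambda>((j, k), x, y). {(j, x), (k, y)}) b"
  moreover obtain j k x y j' k' x' y' where ab: "a = ((j, k), x, y)" "b = ((j', k'), x', y')"
    by (metis prod.exhaust)
  ultimately have "j \<in> A" "k' \<notin> A"
    using arcsD(3,4) by auto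
  with eq show "a = b"
    unfolding ab by (auto simp: doubleton_eq_iff)
qed

lemma prod_cross_edges:
  assumes sym: "\<And>x y. G x y = G y x"
  shows "(\<Prod>t\<in>cross_edges. edge_val G \<Phi> t) = cross_weight G arcs HV (curry_Sigma VF HV \<Phi>)"
proof -
  let ?S = "Sigma arcs (\<lambda>(j, k). HV j \<times> HV k)"
  have "(\<Prod>t\<in>cross_edges. edge_val G \<Phi> t) = (\<Prod>((j, k), x, y)\<in>?S. edge_val G \<Phi> {(j, x), (k, y)})"
    unfolding cross_edges_def prod.reindex[OF inj_on_cross_edge] by (simp add: comp_def case_prod_beta)
  also have "\<dots> = (\<Prod>((j, k), x, y)\<in>?S. G (\<Phi> (j, x)) (\<Phi> (k, y)))"
  proof (rule prod.cong[OF refl])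
    fix z assume "z \<in> ?S"
    then obtain j k x y where "z = ((j, k), x, y)" and jk: "(j, k) \<in> arcs"
      by auto
    moreover have "j \<noteq> k"
      using arcsD(3,4)[OF jk] by blast
    ultimately show "(\<lambda>((j, k), x, y). edge_val G \<Phi> {(j, x), (k, y)}) z
        = (\<lambda>((j, k), x, y). G (\<Phi> (j, x)) (\<Phi> (k, y))) z"
      by (simp add: edge_val_doubleton sym)
  qed
  also have "\<dots> = (\<Prod>(j, k)\<in>arcs. \<Prod>(x, y)\<in>HV j \<times> HV k. G (\<Phi> (j, x)) (\<Phi> (k, y)))"
    using prod.Sigma[OF finite_arcs, of "\<lambda>(j, k). HV j \<times> HV k" "\<lambda>(j, k) (x, y). G (\<Phi> (j, x)) (\<Phi> (k, y))"]
      finite_arc_blocks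
    by (simp add: split_def)
  also have "\<dots> = cross_weight G arcs HV (curry_Sigma VF HV \<Phi>)"
    unfolding cross_weight_def prod.cartesian_product[symmetric]
  proof (rule prod.cong[OF refl], clarify)
    fix j k assume "(j, k) \<in> arcs"
    then show "(\<Prod>x\<in>HV j. \<Prod>y\<in>HV k. G (\<Phi> (j, x)) (\<Phi> (k, y)))
        = (\<Prod>x\<in>HV j. \<Prod>y\<in>HV k. G (curry_Sigma VF HV \<Phi> j x) (curry_Sigma VF HV \<Phi> k y))"
      using arcsD(1,2) by (simp add: curry_Sigma_def)
  qed
  finally show ?thesis .
qed

lemma prod_blowup_E:
  assumes "\<And>x y. G x y = G y x"
  shows "(\<Prod>t\<in>blowup_E VF EF HV HE. edge_val G \<Phi> t)
    = (\<Prod>i\<in>VF. \<Prod>e\<in>HE i. edge_val G (curry_Sigma VF HV \<Phi> i) e)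
      * cross_weight G arcs HV (curry_Sigma VF HV \<Phi>)"
proof -
  have "finite internal_edges"
    using graph_F finite_HE by (simp add: internal_edges_def graph_def)
  moreover have "finite cross_edges"
    unfolding cross_edges_def
    using finite_arcs finite_arc_blocks by (intro finite_imageI finite_SigmaI) auto
  ultimately show ?thesis
    unfolding blowup_E_eq
    by (simp add: prod.union_disjoint internal_edges_disjoint_cross_edges
        prod_internal_edges prod_cross_edges assms)
qed

lemma hom_blowup:
  fixes G :: "'c::finite \<Rightarrow> 'c \<Rightarrow> real"
  assumes "\<And>x y. G x y = G y x"
  shows "hom (blowup_V VF HV) (blowup_E VF EF HV HE) G
    = (\<Sum>\<alpha>\<in>(\<Pi>\<^sub>E i\<in>VF. HV i \<rightarrow>\<^sub>E UNIV).
        (\<Prod>i\<in>VF. \<Prod>e\<in>HE i. edge_val G (\<alpha> i) e) * cross_weight G arcs HV \<alpha>)"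
  unfolding hom_def blowup_V_def prod_blowup_E[OF assms]
  by (rule sum.reindex_bij_betw[OF bij_betw_curry_Sigma])

lemma cross_weight_tensor_square:
  "cross_weight (tensor_square G) arcs HV \<psi>
    = cross_weight G arcs HV (\<lambda>i\<in>VF. side_proj (i \<in> A) (\<psi> i))
      * cross_weight G arcs HV (\<lambda>i\<in>VF. side_proj (i \<notin> A) (\<psi> i))"
proof -
  have "cross_weight (tensor_square G) arcs HV \<psi>
      = (\<Prod>(j, k)\<in>arcs. \<Prod>x\<in>HV j. \<Prod>y\<in>HV k.
          G ((\<lambda>i\<in>VF. side_proj (i \<in> A) (\<psi> i)) j x) ((\<lambda>i\<in>VF. side_proj (i \<in> A) (\<psi> i)) k y)
          * G ((\<lambda>i\<in>VF. side_proj (i \<notin> A) (\<psi> i)) j x) ((\<lambda>i\<in>VF. side_proj (i \<notin> A) (\<psi> i)) k y))"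
    unfolding cross_weight_def
  proof (rule prod.cong[OF refl], clarify)
    fix j k assume "(j, k) \<in> arcs"
    then have "j \<in> VF" "k \<in> VF" "j \<in> A" "k \<notin> A"
      by (rule arcsD)+
    then show "(\<Prod>x\<in>HV j. \<Prod>y\<in>HV k. tensor_square G (\<psi> j x) (\<psi> k y))
        = (\<Prod>x\<in>HV j. \<Prod>y\<in>HV k.
          G ((\<lambda>i\<in>VF. side_proj (i \<in> A) (\<psi> i)) j x) ((\<lambda>i\<in>VF. side_proj (i \<in> A) (\<psi> i)) k y)
          * G ((\<lambda>i\<in>VF. side_proj (i \<notin> A) (\<psi> i)) j x) ((\<lambda>i\<in>VF. side_proj (i \<notin> A) (\<psi> i)) k y))"
      by (simp add: tensor_square_def side_proj_def)
  qed
  then show ?thesis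
    by (simp add: cross_weight_def prod.distrib case_prod_beta)
qed

lemma hom_tensorK2_blowup:
  fixes G :: "'g::finite \<Rightarrow> 'g \<Rightarrow> real"
  assumes "\<And>x y. G x y = G y x"
  shows "hom (tensorK2_V (blowup_V VF HV)) (tensorK2_E (blowup_E VF EF HV HE)) G
    = (\<Sum>\<psi>\<in>(\<Pi>\<^sub>E i\<in>VF. HV i \<rightarrow>\<^sub>E UNIV). (\<Prod>i\<in>VF. \<Prod>e\<in>HE i. edge_val (tensor_square G) (\<psi> i) e)
        * cross_weight G arcs HV (\<lambda>i\<in>VF. side_proj (i \<in> A) (\<psi> i))
        * cross_weight G arcs HV (\<lambda>i\<in>VF. side_proj (i \<notin> A) (\<psi> i)))"
proof -
  have "hom (tensorK2_V (blowup_V VF HV)) (tensorK2_E (blowup_E VF EF HV HE)) G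
      = hom (blowup_V VF HV) (blowup_E VF EF HV HE) (tensor_square G)"
    using graph_blowup[OF graph_F graph_H] by (rule hom_tensorK2[OF assms])
  then show ?thesis
    unfolding hom_blowup[OF tensor_square_sym[OF assms]] cross_weight_tensor_square mult.assoc .
qed

lemma swapping_cross_weight:
  fixes G :: "'g::finite \<Rightarrow> 'g \<Rightarrow> real"
  assumes sym: "\<And>x y. G x y = G y x" and nonneg: "\<And>x y. 0 \<le> G x y"
    and "i \<in> VF" and "wcb_swapping (HV i) (HE i) G"
  shows "marginal (\<lambda>p. \<Prod>e\<in>HE i. edge_val G p e) (HV i \<rightarrow>\<^sub>E UNIV) i (cross_weight G arcs HV) \<alpha>
      * marginal (\<lambda>p. \<Prod>e\<in>HE i. edge_val G p e) (HV i \<rightarrow>\<^sub>E UNIV) i (cross_weight G arcs HV) \<beta>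
    \<le> coupling (\<lambda>q. \<Prod>e\<in>HE i. edge_val (tensor_square G) q e) (HV i \<rightarrow>\<^sub>E UNIV)
        (side_proj (i \<in> A)) (side_proj (i \<notin> A)) i (cross_weight G arcs HV) \<alpha> \<beta>"
proof -
  have loopless: "j \<noteq> k" if "(j, k) \<in> arcs" for j k
    using arcsD(3,4)[OF that] by blast
  obtain Ka a where Ka: "0 \<le> Ka" "\<And>g. 0 \<le> a g"
    and fa: "\<And>p. cross_weight G arcs HV (\<alpha>(i := p)) = Ka * (\<Prod>z\<in>HV i. a (p z))"
    using cross_weight_fun_upd_factor[where G = G and \<alpha> = \<alpha>, OF nonneg loopless] by blast
  obtain Kb b where Kb: "0 \<le> Kb" "\<And>g. 0 \<le> b g"
    and fb: "\<And>p. cross_weight G arcs HV (\<beta>(i := p)) = Kb * (\<Prod>z\<in>HV i. b (p z))"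
    using cross_weight_fun_upd_factor[where G = G and \<alpha> = \<beta>, OF nonneg loopless] by blast
  have "marginal (\<lambda>p. \<Prod>e\<in>HE i. edge_val G p e) (HV i \<rightarrow>\<^sub>E UNIV) i (cross_weight G arcs HV) \<alpha>
      * marginal (\<lambda>p. \<Prod>e\<in>HE i. edge_val G p e) (HV i \<rightarrow>\<^sub>E UNIV) i (cross_weight G arcs HV) \<beta>
      = Ka * Kb * (hom_w (HV i) (HE i) G a * hom_w (HV i) (HE i) G b)"
    unfolding marginal_eq_hom_w[where C = "cross_weight G arcs HV", OF fa]
      marginal_eq_hom_w[where C = "cross_weight G arcs HV", OF fb]
    by (simp only: mult_ac)
  also have "\<dots> \<le> Ka * Kb * (if i \<in> A then hom_cross (HV i) (HE i) G a b else hom_cross (HV i) (HE i) G b a)"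
    using Ka Kb wcb_swappingD[OF assms(4)] by (intro mult_left_mono) auto
  also have "\<dots> = coupling (\<lambda>q. \<Prod>e\<in>HE i. edge_val (tensor_square G) q e) (HV i \<rightarrow>\<^sub>E UNIV)
        (side_proj (i \<in> A)) (side_proj (i \<notin> A)) i (cross_weight G arcs HV) \<alpha> \<beta>"
    by (rule coupling_eq_hom_cross[where C = "cross_weight G arcs HV",
          OF sym graph_H[OF assms(3)] fa fb, symmetric])
  finally show ?thesis .
qed

end

theorem theorem5p4:
  fixes G :: "'g::finite \<Rightarrow> 'g \<Rightarrow> real"
    and VF :: "'f set" and EF :: "'f set set"
    and HV :: "'f \<Rightarrow> 'h set" and HE :: "'f \<Rightarrow> 'h set set"
  assumes "weighted_graph G"
    and "graph VF EF" and "bipartite VF EF"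
    and "\<And>i. i \<in> VF \<Longrightarrow> graph (HV i) (HE i)"
    and "\<And>i. i \<in> VF \<Longrightarrow> wcb_swapping (HV i) (HE i) G"
  shows "bipartite_swapping (blowup_V VF HV) (blowup_E VF EF HV HE) G"
proof -
  have sym: "\<And>x y. G x y = G y x" and nonneg: "\<And>x y. 0 \<le> G x y"
    using assms(1) by (simp_all add: weighted_graph_def)
  obtain A where "\<forall>e\<in>EF. card (e \<inter> A) = 1"
    using assms(3) unfolding bipartite_def by blast
  then interpret bipartite_blowup VF EF HV HE A
    using assms(2,4) by unfold_locales auto
  have "(\<Sum>\<alpha>\<in>(\<Pi>\<^sub>E i\<in>VF. HV i \<rightarrow>\<^sub>E UNIV).
        (\<Prod>i\<in>VF. \<Prod>e\<in>HE i. edge_val G (\<alpha> i) e) * cross_weight G arcs HV \<alpha>)\<^sup>2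
      \<le> (\<Sum>\<psi>\<in>(\<Pi>\<^sub>E i\<in>VF. HV i \<rightarrow>\<^sub>E UNIV).
        (\<Prod>i\<in>VF. \<Prod>e\<in>HE i. edge_val (tensor_square G) (\<psi> i) e)
        * cross_weight G arcs HV (\<lambda>i\<in>VF. side_proj (i \<in> A) (\<psi> i))
        * cross_weight G arcs HV (\<lambda>i\<in>VF. side_proj (i \<notin> A) (\<psi> i)))"
    using graph_F
    by (intro square_sum_PiE_le_coupling[where f = "\<lambda>i p. \<Prod>e\<in>HE i. edge_val G p e"
          and X = "\<lambda>i q. \<Prod>e\<in>HE i. edge_val (tensor_square G) q e"
          and pl = "\<lambda>i. side_proj (i \<in> A)" and pr = "\<lambda>i. side_proj (i \<notin> A)"])
      (auto simp: graph_def sym nonneg tensor_square_sym tensor_square_nonneg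
        intro: prod_edge_val_nonneg graph_H swapping_cross_weight assms(5))
  then show ?thesis
    unfolding bipartite_swapping_def hom_blowup[OF sym] hom_tensorK2_blowup[OF sym] .
qed

end
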